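(* Let $(\mathfrak g,r)$ be a triangular Lie bialgebra with $r:\mathfrak g^*\to\mathfrak g$ invertible. For $\mu\in\mathbb R$ and $\kappa_1,\kappa_2\in\mathbb R$ with $\kappa_1\neq0$, $\kappa_2^2\neq1$, define linear maps on $\mathcal D(\mathfrak g)$ by $N_\mu(x,a^* )=(x,\mu r^{-1}(x)-a^* )$ and $N_{\kappa_1,\kappa_2}(x,a^* )=(\kappa_1r(a^* )+\kappa_2x,\ \frac{1-\kappa_2^2}{\kappa_1}r^{-1}(x)-\kappa_2a^* )$. Let $\tilde N_{\pm,\mu}=N_\mu\varphi^{-1}\pm\varphi^{-1}$ and $\tilde N_{\pm,\kappa_1,\kappa_2}=N_{\kappa_1,\kappa_2}\varphi^{-1}\pm\varphi^{-1}$, regarded as elements of $\mathcal D(\mathfrak g)\otimes\mathcal D(\mathfrak g)$. Then each of them is a solution of the CYBE in $\mathcal D(\mathfrak g)$ whose symmetric part is invariant and invertible; i.e. $(\mathcal D(\mathfrak g),\tilde N_{\pm,\mu})$ and $(\mathcal D(\mathfrak g),\tilde N_{\pm,\kappa_1,\kappa_2})$ are factorizable quasitriangular Lie bialgebras.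
   Context: $\mathfrak g$ a finite-dimensional real Lie algebra; $t\in V\otimes V$ is identified with $t:V^*\to V$ via $\langle t(a),b\rangle=\langle a\otimes b,t\rangle$. $(\mathfrak g,r)$ triangular: $r$ skew-symmetric solution of the CYBE $[r_{12},r_{13}]+[r_{12},r_{23}]+[r_{13},r_{23}]=0$ (for $r=\sum a_i\otimes b_i$: $[r_{12},r_{13}]=\sum[a_i,a_j]\otimes b_i\otimes b_j$, $[r_{12},r_{23}]=\sum a_i\otimes[b_i,a_j]\otimes b_j$, $[r_{13},r_{23}]=\sum a_i\otimes a_j\otimes[b_i,b_j]$). $\langle\mathrm{ad}^*(x)a^*,y\rangle=-\langle a^*,[x,y]\rangle$; $[a^*,b^*]_\delta=\mathrm{ad}^*(r(a^* ))b^*-\mathrm{ad}^*(r(b^* ))a^*$; $\langle\mathrm{ad}^*(a^* )x,b^*\rangle=-\langle x,[a^*,b^*]_\delta\rangle$. $\mathcal D(\mathfrak g)=\mathfrak g\oplus\mathfrak g^*$ with bracket $[(x,a^* ),(y,b^* )]=([x,y]+\mathrm{ad}^*(a^* )y-\mathrm{ad}^*(b^* )x,[a^*,b^*]_\delta+\mathrm{ad}^*(x)b^*-\mathrm{ad}^*(y)a^* )$ and form $\mathfrak B_p((x,a^* ),(y,b^* ))=\langle a^*,y\rangle+\langle x,b^*\rangle$; $\varphi$ defined by $\mathfrak B_p(X,Y)=\langle\varphi(X),Y\rangle$. A quasitriangular Lie bialgebra is factorizable if the symmetric part of its $r$-matrix is invertible as a map from the dual to the algebra. *)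

theory Defs
  imports "HOL-Analysis.Analysis"
begin

text \<open>A finite-dimensional real Lie algebra g is modelled on real^'n with a
bracket br. Its dual g* is modelled on the same type, with pairing <a,x> = a \<bullet> x.
Tensors in V (x) V are finite sums of pure tensors, given as lists of pairs (a_i,b_i)
meaning sum a_i (x) b_i; the dual of V is identified with V via the inner product.
For the double D(g) = g (+) g* (type (real^'n) x (real^'n)), its dual D* = g* (+) g is
modelled on the same product type, the pairing <(alpha,xi),(y,b)> = alpha.y + xi.b being
exactly the inner product of the product type.\<close>

definition lie_algebra :: "('v::real_vector \<Rightarrow> 'v \<Rightarrow> 'v) \<Rightarrow> bool" where
  "lie_algebra br \<longleftrightarrow> (\<forall>x. linear (br x)) \<and> (\<forall>y. linear (\<lambda>x. br x y))
     \<and> (\<forall>x y. br x y = - br y x)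
     \<and> (\<forall>x y z. br x (br y z) + br y (br z x) + br z (br x y) = 0)"

definition ev2 :: "('v::real_inner \<times> 'v) list \<Rightarrow> 'v \<Rightarrow> 'v \<Rightarrow> real" where
  "ev2 ts a b = (\<Sum>(x,y)\<leftarrow>ts. inner a x * inner b y)"

text \<open>The map t : V* \<rightarrow> V with <t(a),b> = <a (x) b, t>.\<close>
definition tmap :: "('v::real_inner \<times> 'v) list \<Rightarrow> 'v \<Rightarrow> 'v" where
  "tmap ts a = (\<Sum>(x,y)\<leftarrow>ts. inner a x *\<^sub>R y)"

definition skew_tensor :: "('v::real_inner \<times> 'v) list \<Rightarrow> bool" where
  "skew_tensor ts \<longleftrightarrow> (\<forall>a b. ev2 ts a b = - ev2 ts b a)"

text \<open>CYBE: [r12,r13]+[r12,r23]+[r13,r23] = 0, the 3-tensor being evaluated on all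
 xi (x) eta (x) zeta with xi, eta, zeta dual vectors.\<close>
definition cybe :: "('v::real_inner \<Rightarrow> 'v \<Rightarrow> 'v) \<Rightarrow> ('v \<times> 'v) list \<Rightarrow> bool" where
  "cybe br ts \<longleftrightarrow> (\<forall>\<xi> \<eta> \<zeta>.
      (\<Sum>(ai,bi)\<leftarrow>ts. \<Sum>(aj,bj)\<leftarrow>ts. inner \<xi> (br ai aj) * inner \<eta> bi * inner \<zeta> bj)
    + (\<Sum>(ai,bi)\<leftarrow>ts. \<Sum>(aj,bj)\<leftarrow>ts. inner \<xi> ai * inner \<eta> (br bi aj) * inner \<zeta> bj)
    + (\<Sum>(ai,bi)\<leftarrow>ts. \<Sum>(aj,bj)\<leftarrow>ts. inner \<xi> ai * inner \<eta> aj * inner \<zeta> (br bi bj)) = 0)"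

definition sym_part :: "('v::real_inner \<times> 'v) list \<Rightarrow> ('v \<times> 'v) list" where
  "sym_part ts = map (\<lambda>(x,y). ((1/2) *\<^sub>R x, y)) ts @ map (\<lambda>(x,y). ((1/2) *\<^sub>R y, x)) ts"

text \<open>ad-invariance of a 2-tensor: [x (x) 1 + 1 (x) x, s] = 0 for all x.\<close>
definition invariant_tensor :: "('v::real_inner \<Rightarrow> 'v \<Rightarrow> 'v) \<Rightarrow> ('v \<times> 'v) list \<Rightarrow> bool" where
  "invariant_tensor br ts \<longleftrightarrow> (\<forall>z a b.
      (\<Sum>(x,y)\<leftarrow>ts. inner a (br z x) * inner b y + inner a x * inner b (br z y)) = 0)"

definition factorizable :: "('v::real_inner \<Rightarrow> 'v \<Rightarrow> 'v) \<Rightarrow> ('v \<Rightarrow> 'v) \<Rightarrow> bool" where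
  "factorizable br t \<longleftrightarrow> (\<exists>ts. tmap ts = t \<and> cybe br ts \<and> invariant_tensor br (sym_part ts)
      \<and> bij (tmap (sym_part ts)))"

definition triangular :: "('v::real_inner \<Rightarrow> 'v \<Rightarrow> 'v) \<Rightarrow> ('v \<times> 'v) list \<Rightarrow> bool" where
  "triangular br rs \<longleftrightarrow> skew_tensor rs \<and> cybe br rs"

definition coad :: "('v::real_inner \<Rightarrow> 'v \<Rightarrow> 'v) \<Rightarrow> 'v \<Rightarrow> 'v \<Rightarrow> 'v" where
  "coad br x a = - adjoint (br x) a"

definition brd :: "('v::real_inner \<Rightarrow> 'v \<Rightarrow> 'v) \<Rightarrow> ('v \<Rightarrow> 'v) \<Rightarrow> 'v \<Rightarrow> 'v \<Rightarrow> 'v" where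
  "brd br r a b = coad br (r a) b - coad br (r b) a"

definition coadd :: "('v::real_inner \<Rightarrow> 'v \<Rightarrow> 'v) \<Rightarrow> ('v \<Rightarrow> 'v) \<Rightarrow> 'v \<Rightarrow> 'v \<Rightarrow> 'v" where
  "coadd br r a x = - adjoint (brd br r a) x"

definition brD :: "('v::real_inner \<Rightarrow> 'v \<Rightarrow> 'v) \<Rightarrow> ('v \<Rightarrow> 'v) \<Rightarrow> 'v \<times> 'v \<Rightarrow> 'v \<times> 'v \<Rightarrow> 'v \<times> 'v" where
  "brD br r X Y = (case X of (x,a) \<Rightarrow> case Y of (y,b) \<Rightarrow>
     (br x y + coadd br r a y - coadd br r b x, brd br r a b + coad br x b - coad br y a))"

definition Bp :: "'v::real_inner \<times> 'v \<Rightarrow> 'v \<times> 'v \<Rightarrow> real" where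
  "Bp X Y = (case X of (x,a) \<Rightarrow> case Y of (y,b) \<Rightarrow> inner a y + inner x b)"

definition phi :: "'v::real_inner \<times> 'v \<Rightarrow> 'v \<times> 'v" where
  "phi X = (THE Z. \<forall>Y. inner Z Y = Bp X Y)"

definition N_mu :: "('v::real_inner \<Rightarrow> 'v) \<Rightarrow> real \<Rightarrow> 'v \<times> 'v \<Rightarrow> 'v \<times> 'v" where
  "N_mu r \<mu> X = (case X of (x,a) \<Rightarrow> (x, \<mu> *\<^sub>R inv r x - a))"

definition N_kappa :: "('v::real_inner \<Rightarrow> 'v) \<Rightarrow> real \<Rightarrow> real \<Rightarrow> 'v \<times> 'v \<Rightarrow> 'v \<times> 'v" where
  "N_kappa r k1 k2 X = (case X of (x,a) \<Rightarrow>
     (k1 *\<^sub>R r a + k2 *\<^sub>R x, ((1 - k2\<^sup>2) / k1) *\<^sub>R inv r x - k2 *\<^sub>R a))"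

end

theory Submission
  imports Defs
begin

text \<open>
  The double D = g + g* carries the invariant symmetric form Bp, i.e. the 3-form
  Bp(X,[Y,Z]) is totally skew. Both maps N = N_mu and N = N_kappa are Bp-skew involutions of D
  whose two eigenspaces, the images of N + 1 and N - 1, are of the form
  L(p,q) = {(p w, q r\<inverse>(w))}; since r\<inverse> is a 2-cocycle, the 3-form vanishes on each L(p,q).
  For any such "Lagrangian splitting" of a metric Lie algebra the tensor (N + \<sigma>) \<phi>\<inverse>, \<sigma> = \<plusminus>1,
  has transpose (\<sigma> - N) \<phi>\<inverse>, so its symmetric part is \<sigma> \<phi>\<inverse> (invariant and invertible), and the
  CYBE reduces, after splitting each argument along the two eigenspaces, to the vanishing of the
  3-form on each eigenspace.
\<close>

definition tmapT :: "('v::real_inner \<times> 'v) list \<Rightarrow> 'v \<Rightarrow> 'v" where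
  "tmapT ts b = (\<Sum>(x,y)\<leftarrow>ts. inner b y *\<^sub>R x)"

lemma tmap_Nil [simp]: "tmap [] a = 0"
  and tmap_Cons [simp]: "tmap ((x,y) # ts) a = inner a x *\<^sub>R y + tmap ts a"
  by (simp_all add: tmap_def)

lemma tmapT_Nil [simp]: "tmapT [] b = 0"
  and tmapT_Cons [simp]: "tmapT ((x,y) # ts) b = inner b y *\<^sub>R x + tmapT ts b"
  by (simp_all add: tmapT_def)

lemma tmap_linear: "linear (tmap ts)"
proof (rule linearI)
  show "tmap ts (a + b) = tmap ts a + tmap ts b" for a b
    by (induction ts) (auto simp: inner_add_left scaleR_add_left)
  show "tmap ts (c *\<^sub>R a) = c *\<^sub>R tmap ts a" for c a
    by (induction ts) (auto simp: scaleR_add_right)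
qed

lemma inner_tmapT: "inner (tmapT ts b) a = inner b (tmap ts a)"
  by (induction ts) (auto simp: inner_add_left inner_add_right algebra_simps inner_commute)

lemma ev2_tmap: "ev2 ts a b = inner b (tmap ts a)"
  by (induction ts) (auto simp: ev2_def inner_add_right algebra_simps)

lemma tmap_sym_part: "tmap (sym_part ts) a = (1/2) *\<^sub>R (tmap ts a + tmapT ts a)"
  and tmapT_sym_part: "tmapT (sym_part ts) a = (1/2) *\<^sub>R (tmap ts a + tmapT ts a)"
  by (induction ts) (auto simp: sym_part_def tmap_def tmapT_def algebra_simps)

lemma tmap_exists:
  fixes t :: "'a::euclidean_space \<Rightarrow> 'a"
  assumes "linear t"
  shows "\<exists>ts. tmap ts = t"
proof -
  obtain bs :: "'a list" where bs: "set bs = Basis" "distinct bs"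
    using finite_distinct_list[OF finite_Basis] by blast
  have "tmap (map (\<lambda>b. (b, t b)) bs) a = t a" for a
  proof -
    have "tmap (map (\<lambda>b. (b, t b)) bs) a = (\<Sum>b\<in>Basis. inner a b *\<^sub>R t b)"
      using sum.distinct_set_conv_list[OF bs(2), of "\<lambda>b. inner a b *\<^sub>R t b"]
      by (simp add: tmap_def o_def bs(1))
    also have "\<dots> = t (\<Sum>b\<in>Basis. inner a b *\<^sub>R b)"
      by (simp add: linear_sum[OF assms] linear_scale[OF assms])
    finally show ?thesis by (simp add: euclidean_representation)
  qed
  then show ?thesis by blast
qed

lemma contract_snd:
  assumes "linear f"
  shows "(\<Sum>(a,b)\<leftarrow>ts. f a * inner \<eta> b) = (f (tmapT ts \<eta>) :: real)"
  by (induction ts)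
    (auto simp: linear_0[OF assms] linear_add[OF assms] linear_scale[OF assms] algebra_simps)

lemma contract_fst:
  assumes "linear f"
  shows "(\<Sum>(a,b)\<leftarrow>ts. inner \<xi> a * f b) = (f (tmap ts \<xi>) :: real)"
  by (induction ts)
    (auto simp: linear_0[OF assms] linear_add[OF assms] linear_scale[OF assms] algebra_simps)

lemma linear_functional_comp: "linear g \<Longrightarrow> linear (\<lambda>x. inner \<xi> (g x) * c)"
  by (rule linearI) (simp_all add: linear_add linear_scale inner_add_right algebra_simps)

lemma cybe_iff:
  fixes Br :: "'v::real_inner \<Rightarrow> 'v \<Rightarrow> 'v"
  assumes lin_r: "\<And>x. linear (Br x)" and lin_l: "\<And>y. linear (\<lambda>x. Br x y)"
  shows "cybe Br ts \<longleftrightarrow> (\<forall>\<xi> \<eta> \<zeta>. inner \<xi> (Br (tmapT ts \<eta>) (tmapT ts \<zeta>))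
     + inner \<eta> (Br (tmap ts \<xi>) (tmapT ts \<zeta>)) + inner \<zeta> (Br (tmap ts \<xi>) (tmap ts \<eta>)) = 0)"
proof -
  have lin_r': "linear (\<lambda>x. inner \<xi> (Br y x) * c)"
    and lin_l': "linear (\<lambda>x. inner \<xi> (Br x y) * c)" for \<xi> y c using linear_functional_comp[OF lin_r] linear_functional_comp[OF lin_l] by blast+
  have t1: "(\<Sum>(ai,bi)\<leftarrow>ts. \<Sum>(aj,bj)\<leftarrow>ts. inner \<xi> (Br ai aj) * inner \<eta> bi * inner \<zeta> bj)
      = inner \<xi> (Br (tmapT ts \<eta>) (tmapT ts \<zeta>))" for \<xi> \<eta> \<zeta>
  proof -
    have "(\<Sum>(aj,bj)\<leftarrow>ts. inner \<xi> (Br ai aj) * inner \<eta> bi * inner \<zeta> bj)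
        = inner \<xi> (Br ai (tmapT ts \<zeta>)) * inner \<eta> bi" for ai bi
      using contract_snd[OF lin_r'[of \<xi> ai "inner \<eta> bi"], where ts=ts and \<eta>=\<zeta>]
      by (simp add: ac_simps)
    then show ?thesis
      using contract_snd[OF lin_l'[where c=1]] by simp
  qed
  have t2: "(\<Sum>(ai,bi)\<leftarrow>ts. \<Sum>(aj,bj)\<leftarrow>ts. inner \<xi> ai * inner \<eta> (Br bi aj) * inner \<zeta> bj)
      = inner \<eta> (Br (tmap ts \<xi>) (tmapT ts \<zeta>))" for \<xi> \<eta> \<zeta>
  proof -
    have "(\<Sum>(aj,bj)\<leftarrow>ts. inner \<xi> ai * inner \<eta> (Br bi aj) * inner \<zeta> bj)
        = inner \<xi> ai * inner \<eta> (Br bi (tmapT ts \<zeta>))" for ai bi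
      using contract_snd[OF lin_r'[of \<eta> bi "inner \<xi> ai"], where ts=ts and \<eta>=\<zeta>]
      by (simp add: ac_simps)
    then show ?thesis
      using contract_fst[OF lin_l'[where c=1]] by simp
  qed
  have t3: "(\<Sum>(ai,bi)\<leftarrow>ts. \<Sum>(aj,bj)\<leftarrow>ts. inner \<xi> ai * inner \<eta> aj * inner \<zeta> (Br bi bj))
      = inner \<zeta> (Br (tmap ts \<xi>) (tmap ts \<eta>))" for \<xi> \<eta> \<zeta>
  proof -
    have "(\<Sum>(aj,bj)\<leftarrow>ts. inner \<xi> ai * inner \<eta> aj * inner \<zeta> (Br bi bj))
        = inner \<xi> ai * inner \<zeta> (Br bi (tmap ts \<eta>))" for ai bi
      using contract_fst[OF lin_r'[of \<zeta> bi "inner \<xi> ai"], where ts=ts and \<xi>=\<eta>]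
      by (simp add: ac_simps)
    then show ?thesis
      using contract_fst[OF lin_l'[where c=1]] by simp
  qed
  show ?thesis
    unfolding cybe_def t1 t2 t3 ..
qed

lemma invariant_tensor_iff:
  fixes Br :: "'v::real_inner \<Rightarrow> 'v \<Rightarrow> 'v"
  assumes lin_r: "\<And>x. linear (Br x)"
  shows "invariant_tensor Br ts \<longleftrightarrow>
    (\<forall>z a b. inner a (Br z (tmapT ts b)) + inner b (Br z (tmap ts a)) = 0)"
proof -
  have lin: "linear (\<lambda>x. inner a (Br z x) * 1)" for a z
    by (rule linear_functional_comp[OF lin_r])
  have "(\<Sum>(x,y)\<leftarrow>ts. inner a (Br z x) * inner b y + inner a x * inner b (Br z y))
      = (\<Sum>(x,y)\<leftarrow>ts. inner a (Br z x) * inner b y) + (\<Sum>(x,y)\<leftarrow>ts. inner a x * inner b (Br z y))"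
    for z a b by (induction ts) auto
  also have "\<dots> z a b = inner a (Br z (tmapT ts b)) + inner b (Br z (tmap ts a))" for z a b
    using contract_snd[OF lin] contract_fst[OF lin] by simp
  finally show ?thesis
    unfolding invariant_tensor_def by simp
qed

text \<open>A skew bilinear bracket on a Euclidean space with a nondegenerate invariant symmetric form
  B(X,Y) = <\<psi> X, Y>, where \<psi> is a self-adjoint involution (the role of \<phi>\<inverse> on the double).\<close>
locale metric_algebra =
  fixes Br :: "'w::euclidean_space \<Rightarrow> 'w \<Rightarrow> 'w" and \<psi> :: "'w \<Rightarrow> 'w"
  assumes Br_linear_right: "linear (Br X)"
    and Br_linear_left: "linear (\<lambda>X. Br X Y)"
    and Br_skew: "Br X Y = - Br Y X"
    and \<psi>_linear: "linear \<psi>"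
    and \<psi>_involution: "\<psi> (\<psi> X) = X"
    and \<psi>_self_adjoint: "inner (\<psi> X) Y = inner X (\<psi> Y)"
    and invariant: "inner (\<psi> (Br X Y)) Z = inner (\<psi> X) (Br Y Z)"
begin

definition B :: "'w \<Rightarrow> 'w \<Rightarrow> real" where
  "B X Y = inner (\<psi> X) Y"

lemma Br_simps [simp]:
  "Br (X + Y) Z = Br X Z + Br Y Z" "Br X (Y + Z) = Br X Y + Br X Z"
  "Br (X - Y) Z = Br X Z - Br Y Z" "Br X (Y - Z) = Br X Y - Br X Z"
  "Br (c *\<^sub>R X) Y = c *\<^sub>R Br X Y" "Br X (c *\<^sub>R Y) = c *\<^sub>R Br X Y"
  "Br (- X) Y = - Br X Y" "Br X (- Y) = - Br X Y"
  using linear_neg[OF Br_linear_left] linear_neg[OF Br_linear_right]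
    linear_add[OF Br_linear_left] linear_add[OF Br_linear_right]
    linear_diff[OF Br_linear_left] linear_diff[OF Br_linear_right]
    linear_scale[OF Br_linear_left] linear_scale[OF Br_linear_right] by auto

lemma B_simps [simp]:
  "B (X + Y) Z = B X Z + B Y Z" "B X (Y + Z) = B X Y + B X Z"
  "B (X - Y) Z = B X Z - B Y Z" "B X (Y - Z) = B X Y - B X Z"
  "B (c *\<^sub>R X) Y = c * B X Y" "B X (c *\<^sub>R Y) = c * B X Y"
  "B (- X) Y = - B X Y" "B X (- Y) = - B X Y"
  by (simp_all add: B_def linear_add[OF \<psi>_linear] linear_diff[OF \<psi>_linear]
      linear_scale[OF \<psi>_linear] linear_neg[OF \<psi>_linear]
      inner_add_left inner_add_right inner_diff_left inner_diff_right)

lemma B_sym: "B X Y = B Y X"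
  unfolding B_def by (metis \<psi>_self_adjoint inner_commute)

text \<open>Invariance makes the 3-form B X [Y,Z] totally skew-symmetric.\<close>
lemma B_cyclic: "B X (Br Y Z) = B Z (Br X Y)"
  using invariant[of X Y Z] B_sym[of Z "Br X Y"] by (simp add: B_def)

lemma B_swap: "B X (Br Y Z) = - B Y (Br X Z)"
  using B_cyclic[of Y X Z] B_cyclic[of X Y Z] Br_skew[of X Y] by (simp add: B_def)

end

text \<open>A B-skew involution N whose eigenspaces, the images of N \<plusminus> 1, are annihilated by the
  3-form B X [Y,Z]; for the Lagrangian eigenspaces this says they are subalgebras (a Manin triple).\<close>
locale lagrangian_splitting = metric_algebra Br \<psi>
  for Br :: "'w::euclidean_space \<Rightarrow> 'w \<Rightarrow> 'w" and \<psi> +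
  fixes N :: "'w \<Rightarrow> 'w"
  assumes N_linear: "linear N"
    and N_skew: "B (N X) Y = - B X (N Y)"
    and N_involution: "N (N X) = X"
    and N_lagrangian: "\<epsilon>\<^sup>2 = 1 \<Longrightarrow>
       B (N X + \<epsilon> *\<^sub>R X) (Br (N Y + \<epsilon> *\<^sub>R Y) (N Z + \<epsilon> *\<^sub>R Z)) = 0"
begin

text \<open>Since N is B-skew, the transpose of (N + \<sigma>) \<psi> is (\<sigma> - N) \<psi>.\<close>
lemma transpose_of_splitting:
  assumes t: "tmap ts = (\<lambda>\<xi>. N (\<psi> \<xi>) + \<sigma> *\<^sub>R \<psi> \<xi>)"
  shows "tmapT ts = (\<lambda>\<eta>. \<sigma> *\<^sub>R \<psi> \<eta> - N (\<psi> \<eta>))"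
proof (rule ext, rule vector_eq_rdot[THEN iffD1], rule allI)
  fix \<eta> \<xi>
  have "inner (tmapT ts \<eta>) \<xi> = B (\<psi> \<eta>) (N (\<psi> \<xi>) + \<sigma> *\<^sub>R \<psi> \<xi>)"
    by (simp add: inner_tmapT t B_def \<psi>_involution)
  also have "\<dots> = B (\<sigma> *\<^sub>R \<psi> \<eta> - N (\<psi> \<eta>)) (\<psi> \<xi>)"
    using N_skew[of "\<psi> \<eta>" "\<psi> \<xi>"] B_sym[of "\<psi> \<eta>" "\<psi> \<xi>"] by simp
  also have "\<dots> = inner (\<sigma> *\<^sub>R \<psi> \<eta> - N (\<psi> \<eta>)) \<xi>"
    by (simp add: B_def \<psi>_self_adjoint \<psi>_involution)
  finally show "inner (tmapT ts \<eta>) \<xi> = inner (\<sigma> *\<^sub>R \<psi> \<eta> - N (\<psi> \<eta>)) \<xi>" .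
qed

context
  fixes \<sigma> :: real
  assumes \<sigma>: "\<sigma>\<^sup>2 = 1"
begin

text \<open>A = N + \<sigma> and C = \<sigma> - N map onto the \<sigma>- and the (-\<sigma>)-eigenspace of N, and A + C = 2\<sigma>.\<close>
definition A :: "'w \<Rightarrow> 'w" where "A X = N X + \<sigma> *\<^sub>R X"
definition C :: "'w \<Rightarrow> 'w" where "C X = \<sigma> *\<^sub>R X - N X"

lemma A_isotropic: "B (A X) (Br (A Y) (A Z)) = 0"
  unfolding A_def by (rule N_lagrangian[OF \<sigma>])

lemma C_isotropic: "B (C X) (Br (C Y) (C Z)) = 0"
proof -
  have C_neg: "C U = - (N U + (- \<sigma>) *\<^sub>R U)" for U by (simp add: C_def)
  have "B (C X) (Br (C Y) (C Z))
      = - B (N X + (- \<sigma>) *\<^sub>R X) (Br (N Y + (- \<sigma>) *\<^sub>R Y) (N Z + (- \<sigma>) *\<^sub>R Z))"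
    unfolding C_neg by (simp only: B_simps(7) Br_simps(7,8) minus_minus)
  also have "\<dots> = 0"
    using N_lagrangian[of "- \<sigma>" X Y Z] \<sigma> by simp
  finally show ?thesis .
qed

text \<open>Every vector is split along the two eigenspaces: X = \<sigma>/2 (A X + C X).\<close>
lemma B_split: "B X W = (\<sigma> / 2) * (B (A X) W + B (C X) W)"
proof -
  have "B (A X) W + B (C X) W = B (\<sigma> *\<^sub>R X + \<sigma> *\<^sub>R X) W"
    by (simp add: A_def C_def)
  also have "\<dots> = 2 * \<sigma> * B X W"
    by simp
  finally have "(\<sigma> / 2) * (B (A X) W + B (C X) W) = \<sigma>\<^sup>2 * B X W"
    by (simp add: power2_eq_square)
  then show ?thesis using \<sigma> by simp
qed

text \<open>The CYBE: after splitting, the terms lying in a single eigenspace vanish and the mixed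
  terms cancel by total skew-symmetry of the 3-form.\<close>
lemma cybe_splitting:
  assumes t: "tmap ts = (\<lambda>\<xi>. N (\<psi> \<xi>) + \<sigma> *\<^sub>R \<psi> \<xi>)"
  shows "cybe Br ts"
  unfolding cybe_iff[OF Br_linear_right Br_linear_left]
proof (intro allI)
  fix \<xi> \<eta> \<zeta> :: 'w
  define X Y Z where "X = \<psi> \<xi>" and "Y = \<psi> \<eta>" and "Z = \<psi> \<zeta>"
  have inner_B: "inner \<xi> W = B X W" "inner \<eta> W = B Y W" "inner \<zeta> W = B Z W" for W
    by (simp_all add: B_def X_def Y_def Z_def \<psi>_involution)
  have "tmap ts \<xi> = A X" "tmap ts \<eta> = A Y" "tmapT ts \<eta> = C Y" "tmapT ts \<zeta> = C Z"
    by (simp_all add: transpose_of_splitting[OF t] t A_def C_def X_def Y_def Z_def)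
  then have "inner \<xi> (Br (tmapT ts \<eta>) (tmapT ts \<zeta>)) + inner \<eta> (Br (tmap ts \<xi>) (tmapT ts \<zeta>))
      + inner \<zeta> (Br (tmap ts \<xi>) (tmap ts \<eta>))
      = B X (Br (C Y) (C Z)) + B Y (Br (A X) (C Z)) + B Z (Br (A X) (A Y))"
    by (simp only: inner_B)
  also have "\<dots> = (\<sigma> / 2) * (B (A X) (Br (C Y) (C Z)) + B (C X) (Br (C Y) (C Z)))
      + (\<sigma> / 2) * (B (A Y) (Br (A X) (C Z)) + B (C Y) (Br (A X) (C Z)))
      + (\<sigma> / 2) * (B (A Z) (Br (A X) (A Y)) + B (C Z) (Br (A X) (A Y)))"
    using B_split[of X "Br (C Y) (C Z)"] B_split[of Y "Br (A X) (C Z)"]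
      B_split[of Z "Br (A X) (A Y)"] by linarith
  also have "\<dots> = (\<sigma> / 2) * (B (A X) (Br (C Y) (C Z)) + B (A Y) (Br (A X) (C Z))
      + B (C Y) (Br (A X) (C Z)) + B (C Z) (Br (A X) (A Y)))"
    unfolding C_isotropic A_isotropic by (simp add: algebra_simps)
  also have "\<dots> = 0"
    using B_swap[of "C Y" "A X" "C Z"] B_swap[of "A Y" "A X" "C Z"] B_cyclic[of "A X" "A Y" "C Z"]
    by simp
  finally show "inner \<xi> (Br (tmapT ts \<eta>) (tmapT ts \<zeta>)) + inner \<eta> (Br (tmap ts \<xi>) (tmapT ts \<zeta>))
      + inner \<zeta> (Br (tmap ts \<xi>) (tmap ts \<eta>)) = 0" .
qed

lemma factorizable_splitting: "factorizable Br (\<lambda>\<xi>. N (\<psi> \<xi>) + \<sigma> *\<^sub>R \<psi> \<xi>)"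
proof -
  have "linear (\<lambda>\<xi>. N (\<psi> \<xi>) + \<sigma> *\<^sub>R \<psi> \<xi>)"
    using N_linear \<psi>_linear by (intro linear_compose_add linear_compose_scale_right)
      (auto simp: linear_compose[unfolded o_def])
  then obtain ts where t: "tmap ts = (\<lambda>\<xi>. N (\<psi> \<xi>) + \<sigma> *\<^sub>R \<psi> \<xi>)"
    using tmap_exists by blast
  have sym: "tmap (sym_part ts) = (\<lambda>\<xi>. \<sigma> *\<^sub>R \<psi> \<xi>)"
    "tmapT (sym_part ts) = (\<lambda>\<xi>. \<sigma> *\<^sub>R \<psi> \<xi>)"
    by (auto simp: tmap_sym_part tmapT_sym_part t transpose_of_splitting[OF t] algebra_simps
        simp flip: scaleR_2)
  have "invariant_tensor Br (sym_part ts)"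
    unfolding invariant_tensor_iff[OF Br_linear_right] sym
  proof (intro allI)
    fix z a b :: 'w
    have inner_B: "inner c W = B (\<psi> c) W" for c W by (simp add: B_def \<psi>_involution)
    show "inner a (Br z (\<sigma> *\<^sub>R \<psi> b)) + inner b (Br z (\<sigma> *\<^sub>R \<psi> a)) = 0"
      unfolding inner_B
      using B_swap[of "\<psi> a" z "\<psi> b"] B_swap[of "\<psi> b" z "\<psi> a"] Br_skew[of "\<psi> a" "\<psi> b"]
      by simp
  qed
  moreover have "bij (tmap (sym_part ts))"
    unfolding sym using \<sigma>
    by (intro o_bij[where g="\<lambda>\<xi>. \<sigma> *\<^sub>R \<psi> \<xi>"])
      (auto simp: fun_eq_iff linear_scale[OF \<psi>_linear] \<psi>_involution power2_eq_square)
  ultimately show ?thesis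
    unfolding factorizable_def using t cybe_splitting[OF t] by blast
qed

end

end

locale triangular_bialgebra =
  fixes br :: "'v::euclidean_space \<Rightarrow> 'v \<Rightarrow> 'v" and rs :: "('v \<times> 'v) list"
  assumes lie: "lie_algebra br" and tri: "triangular br rs" and r_bij: "bij (tmap rs)"
begin

abbreviation r :: "'v \<Rightarrow> 'v" where "r \<equiv> tmap rs"
abbreviation \<omega> :: "'v \<Rightarrow> 'v" where "\<omega> \<equiv> inv r"

lemma br_linear_right: "linear (br x)"
  and br_linear_left: "linear (\<lambda>x. br x y)"
  and br_skew: "br x y = - br y x"
  using lie unfolding lie_algebra_def by blast+

lemma br_simps [simp]:
  "br (a + b) c = br a c + br b c" "br a (b + c) = br a b + br a c"
  "br (a - b) c = br a c - br b c" "br a (b - c) = br a b - br a c"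
  "br (k *\<^sub>R a) c = k *\<^sub>R br a c" "br a (k *\<^sub>R c) = k *\<^sub>R br a c"
  "br (- a) c = - br a c" "br a (- c) = - br a c"
  using linear_add[OF br_linear_left] linear_add[OF br_linear_right]
    linear_diff[OF br_linear_left] linear_diff[OF br_linear_right]
    linear_scale[OF br_linear_left] linear_scale[OF br_linear_right]
    linear_neg[OF br_linear_left] linear_neg[OF br_linear_right] by auto

lemma r_simps [simp]:
  "r (a + b) = r a + r b" "r (a - b) = r a - r b"
  "r (k *\<^sub>R a) = k *\<^sub>R r a" "r (- a) = - r a"
  using linear_add[OF tmap_linear] linear_diff[OF tmap_linear] linear_scale[OF tmap_linear]
    linear_neg[OF tmap_linear] by auto

lemma r_skew: "inner (r a) b = - inner a (r b)"
  using tri unfolding triangular_def skew_tensor_def ev2_tmap by (metis inner_commute)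

lemma tmapT_r: "tmapT rs = (\<lambda>a. - r a)"
  by (rule ext, rule vector_eq_rdot[THEN iffD1]) (simp add: inner_tmapT r_skew)

lemma r_cybe:
  "inner a (br (r b) (r c)) - inner b (br (r a) (r c)) + inner c (br (r a) (r b)) = 0"
proof -
  have "cybe br rs" using tri unfolding triangular_def by simp
  then show ?thesis
    unfolding cybe_iff[OF br_linear_right br_linear_left] tmapT_r by (simp add: inner_minus_right)
qed

lemma r_\<omega> [simp]: "r (\<omega> x) = x"
  using r_bij by (simp add: bij_def surj_f_inv_f)

lemma \<omega>_r [simp]: "\<omega> (r x) = x"
  using r_bij by (simp add: bij_def inv_f_f)

lemma \<omega>_linear: "linear \<omega>"
  using r_bij inj_linear_imp_inv_linear[OF tmap_linear[of rs]] by (simp add: bij_def)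

lemma \<omega>_simps [simp]:
  "\<omega> (a + b) = \<omega> a + \<omega> b" "\<omega> (a - b) = \<omega> a - \<omega> b"
  "\<omega> (k *\<^sub>R a) = k *\<^sub>R \<omega> a" "\<omega> (- a) = - \<omega> a"
  using linear_add[OF \<omega>_linear] linear_diff[OF \<omega>_linear] linear_scale[OF \<omega>_linear]
    linear_neg[OF \<omega>_linear] by auto

lemma \<omega>_skew: "inner (\<omega> a) b = - inner a (\<omega> b)"
  using r_skew[of "\<omega> a" "\<omega> b"] by simp

text \<open>The inverse of a triangular r-matrix is a 2-cocycle: the CYBE read through r\<inverse>.\<close>
lemma \<omega>_cocycle:
  "inner (\<omega> a) (br b c) + inner (\<omega> b) (br c a) + inner (\<omega> c) (br a b) = 0"
  using r_cybe[of "\<omega> a" "\<omega> b" "\<omega> c"] br_skew[of a c] by (simp add: inner_minus_right)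

end

context triangular_bialgebra
begin

abbreviation bD :: "'v \<times> 'v \<Rightarrow> 'v \<times> 'v \<Rightarrow> 'v \<times> 'v" where "bD \<equiv> brD br r"

lemma inner_coad: "inner y (coad br x a) = - inner a (br x y)"
  unfolding coad_def using adjoint_clauses(2)[OF br_linear_right]
  by (simp add: inner_minus_right inner_commute)

lemma brd_linear: "linear (brd br r a)"
proof -
  have "coad br x (b1 + b2) = coad br x b1 + coad br x b2"
    "coad br x (k *\<^sub>R b) = k *\<^sub>R coad br x b"
    "coad br (x1 + x2) b = coad br x1 b + coad br x2 b" "coad br (k *\<^sub>R x) b = k *\<^sub>R coad br x b"
    for x x1 x2 b b1 b2 k
    by (rule vector_eq_ldot[THEN iffD1], simp add: inner_coad inner_add_left inner_add_right)+
  then show ?thesis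
    by (intro linearI) (simp_all add: brd_def algebra_simps)
qed

lemma inner_coadd: "inner b (coadd br r a x) = - inner x (brd br r a b)"
  unfolding coadd_def using adjoint_clauses(2)[OF brd_linear]
  by (simp add: inner_minus_right inner_commute)

lemma inner_brD: "inner (c,p) (bD (y,b) (z,e)) = inner c (br y z) + inner c (br (r b) z)
   - inner b (br (r c) z) - inner c (br (r e) y) + inner e (br (r c) y) - inner e (br (r b) p)
   + inner b (br (r e) p) - inner e (br y p) + inner b (br z p)"
  by (simp add: brD_def inner_add_right inner_diff_right inner_coadd inner_coad brd_def
      algebra_simps)

text \<open>Invariance of the natural pairing Bp: the 3-form <swap X,[Y,Z]> is cyclic.\<close>
lemma inner_brD_cyclic: "inner (c,p) (bD (y,b) (z,e)) = inner (b,y) (bD (z,e) (p,c))"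
  unfolding inner_brD using br_skew[of z y] br_skew[of p y] by simp

lemma brD_skew: "bD X Y = - bD Y X"
proof -
  obtain x a y b where "X = (x,a)" "Y = (y,b)" by fastforce
  then show ?thesis using br_skew[of x y] by (simp add: brD_def brd_def algebra_simps)
qed

lemma brD_linear_right: "linear (bD X)"
proof (rule linearI)
  show "bD X (Y1 + Y2) = bD X Y1 + bD X Y2" "bD X (k *\<^sub>R Y) = k *\<^sub>R bD X Y" for Y Y1 Y2 k
    by (cases X, cases Y, cases Y1, cases Y2, rule vector_eq_ldot[THEN iffD1], clarify,
        simp add: inner_brD inner_add_right algebra_simps)+
qed

sublocale double: metric_algebra bD prod.swap
proof (rule metric_algebra.intro)
  show "linear (bD X)" for X by (rule brD_linear_right)
  show "linear (\<lambda>X. bD X Y)" for Y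
    using brD_linear_right[of Y] by (subst brD_skew) (simp add: linear_compose_neg[unfolded o_def])
  show "bD X Y = - bD Y X" for X Y by (rule brD_skew)
  show "linear (prod.swap :: 'v \<times> 'v \<Rightarrow> _)"
    by (rule linearI) (simp_all add: prod.swap_def)
  show "prod.swap (prod.swap X) = X" for X :: "'v \<times> 'v" by simp
  show "inner (prod.swap X) Y = inner X (prod.swap Y)" for X Y :: "'v \<times> 'v"
    by (cases X, cases Y) (simp add: add.commute)
  show "inner (prod.swap (bD X Y)) Z = inner (prod.swap X) (bD Y Z)" for X Y Z
  proof -
    obtain p c y b z e where XYZ: "X = (p,c)" "Y = (y,b)" "Z = (z,e)" by (metis surj_pair)
    have "inner (prod.swap (bD X Y)) Z = inner (e,z) (bD (p,c) (y,b))"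
      unfolding XYZ by (cases "bD (p,c) (y,b)") (simp add: add.commute inner_commute)
    also have "\<dots> = inner (c,p) (bD (y,b) (z,e))"
      by (rule inner_brD_cyclic)
    also have "\<dots> = inner (prod.swap X) (bD Y Z)"
      by (simp add: XYZ)
    finally show ?thesis .
  qed
qed

text \<open>The subspaces L(p,q) = {(p w, q \<omega>(w))} of the double: g (q = 0), g* (p = 0), and the
  graphs of multiples of the cocycle \<omega>.\<close>
definition graph_space :: "real \<Rightarrow> real \<Rightarrow> ('v \<times> 'v) set" where
  "graph_space p q = range (\<lambda>w. (p *\<^sub>R w, q *\<^sub>R \<omega> w))"

lemma graph_spaceI: "X = (p *\<^sub>R w, q *\<^sub>R \<omega> w) \<Longrightarrow> X \<in> graph_space p q"
  unfolding graph_space_def by blast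

text \<open>The 3-form of the double vanishes on each L(p,q); this is the cocycle identity for \<omega>.\<close>
lemma graph_space_isotropic:
  assumes "X \<in> graph_space p q" "Y \<in> graph_space p q" "Z \<in> graph_space p q"
  shows "double.B X (bD Y Z) = 0"
proof -
  obtain u v w where XYZ: "X = (p *\<^sub>R u, q *\<^sub>R \<omega> u)" "Y = (p *\<^sub>R v, q *\<^sub>R \<omega> v)"
    "Z = (p *\<^sub>R w, q *\<^sub>R \<omega> w)"
    using assms unfolding graph_space_def by blast
  have "double.B X (bD Y Z) = (p * p * q + 2 * p * q * q)
      * (inner (\<omega> u) (br v w) + inner (\<omega> v) (br w u) + inner (\<omega> w) (br u v))"
    unfolding XYZ double.B_def prod.swap_def fst_conv snd_conv inner_brD
    using br_skew[of w v] br_skew[of v u] br_skew[of u w]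
    by (simp add: inner_minus_right algebra_simps)
  then show ?thesis
    using \<omega>_cocycle[of u v w] by simp
qed

lemma splitting_from_graphs:
  fixes N :: "'v \<times> 'v \<Rightarrow> 'v \<times> 'v"
  assumes N_linear: "linear N"
    and N_skew: "\<And>X Y. double.B (N X) Y = - double.B X (N Y)"
    and N_involution: "\<And>X. N (N X) = X"
    and N_graphs: "\<And>\<epsilon>. \<epsilon>\<^sup>2 = 1 \<Longrightarrow> \<exists>p q. \<forall>X. N X + \<epsilon> *\<^sub>R X \<in> graph_space p q"
  shows "lagrangian_splitting bD prod.swap N"
proof (rule lagrangian_splitting.intro[OF double.metric_algebra_axioms],
    rule lagrangian_splitting_axioms.intro[OF N_linear N_skew N_involution])
  fix \<epsilon> :: real and X Y Z
  assume "\<epsilon>\<^sup>2 = 1"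
  then obtain p q where "\<forall>X. N X + \<epsilon> *\<^sub>R X \<in> graph_space p q"
    using N_graphs by blast
  then show "double.B (N X + \<epsilon> *\<^sub>R X) (bD (N Y + \<epsilon> *\<^sub>R Y) (N Z + \<epsilon> *\<^sub>R Z)) = 0"
    by (blast intro: graph_space_isotropic)
qed

text \<open>N_mu: its eigenspaces are L(2,\<mu>) and L(0,1) = g*.\<close>
lemma N_mu_splitting: "lagrangian_splitting bD prod.swap (N_mu r \<mu>)"
proof (rule splitting_from_graphs)
  have N_pair: "N_mu r \<mu> (x,a) = (x, \<mu> *\<^sub>R \<omega> x - a)" for x a
    by (simp add: N_mu_def)
  show "linear (N_mu r \<mu>)"
  proof (rule linearI)
    show "N_mu r \<mu> (X + Y) = N_mu r \<mu> X + N_mu r \<mu> Y" "N_mu r \<mu> (c *\<^sub>R X) = c *\<^sub>R N_mu r \<mu> X"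
      for X Y c by (cases X, cases Y, simp add: N_pair algebra_simps)+
  qed
  show "double.B (N_mu r \<mu> X) Y = - double.B X (N_mu r \<mu> Y)" for X Y
  proof -
    obtain x a y b where "X = (x,a)" "Y = (y,b)" by fastforce
    then show ?thesis
      using \<omega>_skew[of x y] by (simp add: N_pair double.B_def inner_diff_left inner_diff_right)
  qed
  show "N_mu r \<mu> (N_mu r \<mu> X) = X" for X
    by (cases X) (simp add: N_pair)
  show "\<exists>p q. \<forall>X. N_mu r \<mu> X + \<epsilon> *\<^sub>R X \<in> graph_space p q" if "\<epsilon>\<^sup>2 = 1" for \<epsilon>
  proof (cases "\<epsilon> = 1")
    case True
    have "N_mu r \<mu> X + \<epsilon> *\<^sub>R X = (2 *\<^sub>R fst X, \<mu> *\<^sub>R \<omega> (fst X))" for X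
      by (cases X) (simp add: N_pair True scaleR_2)
    then have "\<forall>X. N_mu r \<mu> X + \<epsilon> *\<^sub>R X \<in> graph_space 2 \<mu>"
      by (blast intro: graph_spaceI)
    then show ?thesis by blast
  next
    case False
    then have "\<epsilon> = -1" using that by (simp add: power2_eq_1_iff)
    then have "N_mu r \<mu> X + \<epsilon> *\<^sub>R X = (0 *\<^sub>R r (\<mu> *\<^sub>R \<omega> (fst X) - 2 *\<^sub>R snd X),
        1 *\<^sub>R \<omega> (r (\<mu> *\<^sub>R \<omega> (fst X) - 2 *\<^sub>R snd X)))" for X
      by (cases X) (simp add: N_pair scaleR_2)
    then have "\<forall>X. N_mu r \<mu> X + \<epsilon> *\<^sub>R X \<in> graph_space 0 1"
      by (blast intro: graph_spaceI)
    then show ?thesis by blast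
  qed
qed

text \<open>N_kappa: the image of N + \<epsilon> is L(\<kappa>1, \<epsilon> - \<kappa>2), using \<epsilon>^2 = 1.\<close>
lemma N_kappa_splitting:
  assumes k1: "\<kappa>1 \<noteq> 0"
  shows "lagrangian_splitting bD prod.swap (N_kappa r \<kappa>1 \<kappa>2)"
proof (rule splitting_from_graphs)
  define c where "c = (1 - \<kappa>2\<^sup>2) / \<kappa>1"
  have c: "\<kappa>1 * c = 1 - \<kappa>2\<^sup>2" using k1 by (simp add: c_def)
  have N_pair: "N_kappa r \<kappa>1 \<kappa>2 (x,a) = (\<kappa>1 *\<^sub>R r a + \<kappa>2 *\<^sub>R x, c *\<^sub>R \<omega> x - \<kappa>2 *\<^sub>R a)"
    for x a
    by (simp add: N_kappa_def c_def)
  show "linear (N_kappa r \<kappa>1 \<kappa>2)"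
  proof (rule linearI)
    show "N_kappa r \<kappa>1 \<kappa>2 (X + Y) = N_kappa r \<kappa>1 \<kappa>2 X + N_kappa r \<kappa>1 \<kappa>2 Y"
      "N_kappa r \<kappa>1 \<kappa>2 (t *\<^sub>R X) = t *\<^sub>R N_kappa r \<kappa>1 \<kappa>2 X"
      for X Y t by (cases X, cases Y, simp add: N_pair algebra_simps)+
  qed
  show "double.B (N_kappa r \<kappa>1 \<kappa>2 X) Y = - double.B X (N_kappa r \<kappa>1 \<kappa>2 Y)" for X Y
  proof -
    obtain x a y b where "X = (x,a)" "Y = (y,b)" by fastforce
    then show ?thesis
      using \<omega>_skew[of x y] r_skew[of a b]
      by (simp add: N_pair double.B_def inner_add_left inner_add_right
          inner_diff_left inner_diff_right)
  qed
  show "N_kappa r \<kappa>1 \<kappa>2 (N_kappa r \<kappa>1 \<kappa>2 X) = X" for X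
  proof -
    obtain x a where X: "X = (x,a)" by fastforce
    have "N_kappa r \<kappa>1 \<kappa>2 (N_kappa r \<kappa>1 \<kappa>2 X)
        = ((\<kappa>1 * c + \<kappa>2\<^sup>2) *\<^sub>R x, (\<kappa>1 * c + \<kappa>2\<^sup>2) *\<^sub>R a)"
      by (simp add: X N_pair algebra_simps power2_eq_square)
    then show ?thesis using c X by simp
  qed
  show "\<exists>p q. \<forall>X. N_kappa r \<kappa>1 \<kappa>2 X + \<epsilon> *\<^sub>R X \<in> graph_space p q" if \<epsilon>: "\<epsilon>\<^sup>2 = 1" for \<epsilon>
  proof -
    have "N_kappa r \<kappa>1 \<kappa>2 X + \<epsilon> *\<^sub>R X \<in> graph_space \<kappa>1 (\<epsilon> - \<kappa>2)" for X
    proof -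
      obtain x a where X: "X = (x,a)" by fastforce
      define d where "d = (\<kappa>2 + \<epsilon>) / \<kappa>1"
      have d1: "\<kappa>1 * d = \<kappa>2 + \<epsilon>" using k1 by (simp add: d_def)
      have d2: "(\<epsilon> - \<kappa>2) * d = c"
        using \<epsilon> by (simp add: d_def c_def algebra_simps power2_eq_square)
      have "\<kappa>1 *\<^sub>R (r a + d *\<^sub>R x) = \<kappa>1 *\<^sub>R r a + \<kappa>2 *\<^sub>R x + \<epsilon> *\<^sub>R x"
        by (simp add: scaleR_add_right d1 scaleR_add_left)
      moreover have "(\<epsilon> - \<kappa>2) *\<^sub>R \<omega> (r a + d *\<^sub>R x) = c *\<^sub>R \<omega> x - \<kappa>2 *\<^sub>R a + \<epsilon> *\<^sub>R a"
        by (simp add: scaleR_add_right d2 scaleR_diff_left)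
      ultimately have "N_kappa r \<kappa>1 \<kappa>2 X + \<epsilon> *\<^sub>R X
        = (\<kappa>1 *\<^sub>R (r a + d *\<^sub>R x), (\<epsilon> - \<kappa>2) *\<^sub>R \<omega> (r a + d *\<^sub>R x))"
        by (simp add: X N_pair)
      then show ?thesis
        by (rule graph_spaceI)
    qed
    then show ?thesis by blast
  qed
qed

end

lemma phi_eq_swap: "phi = (prod.swap :: 'v::real_inner \<times> 'v \<Rightarrow> _)"
proof
  fix X :: "'v \<times> 'v"
  have Bp_swap: "Bp X Y = inner (prod.swap X) Y" for Y
    by (cases X, cases Y) (simp add: Bp_def)
  show "phi X = prod.swap X"
    unfolding phi_def Bp_swap
  proof (rule the_equality)
    fix Z assume "\<forall>Y. inner Z Y = inner (prod.swap X) Y"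
    then show "Z = prod.swap X" using vector_eq_rdot by blast
  qed simp
qed

lemma inv_phi: "inv phi = (prod.swap :: 'v::real_inner \<times> 'v \<Rightarrow> _)"
  unfolding phi_eq_swap by (rule inv_unique_comp) (auto simp: fun_eq_iff)

text \<open>Both maps are Lagrangian splittings of the double, so the abstract criterion applies.\<close>
theorem proposition4p10:
  fixes br :: "real^'n \<Rightarrow> real^'n \<Rightarrow> real^'n"
    and rs :: "((real^'n) \<times> (real^'n)) list"
    and \<mu> \<kappa>1 \<kappa>2 \<sigma> :: real
  assumes "lie_algebra br"
    and "triangular br rs"
    and "bij (tmap rs)"
    and "\<sigma> = 1 \<or> \<sigma> = -1"
    and "\<kappa>1 \<noteq> 0" and "\<kappa>2\<^sup>2 \<noteq> 1"
  shows "factorizable (brD br (tmap rs)) (\<lambda>X. N_mu (tmap rs) \<mu> (inv phi X) + \<sigma> *\<^sub>R inv phi X)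
       \<and> factorizable (brD br (tmap rs)) (\<lambda>X. N_kappa (tmap rs) \<kappa>1 \<kappa>2 (inv phi X) + \<sigma> *\<^sub>R inv phi X)"
proof -
  interpret triangular_bialgebra br rs
    using assms(1-3) by unfold_locales
  have \<sigma>: "\<sigma>\<^sup>2 = 1" using assms(4) by auto
  have "factorizable bD (\<lambda>X. N (inv phi X) + \<sigma> *\<^sub>R inv phi X)"
    if "lagrangian_splitting bD prod.swap N" for N
    using lagrangian_splitting.factorizable_splitting[OF that \<sigma>] by (simp add: inv_phi)
  then show ?thesis
    using N_mu_splitting N_kappa_splitting[OF assms(5)] by blast
qed

end
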